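(* Let $n\ge1$ and let $f\colon[0,1]^n\to\mathbb{R}$ be a Lovász extension. The following are equivalent: (a) $I(f,k)=I(f,1)$ for all $k\in\{1,\ldots,n\}$; (b) the sequence $(\overline{v}_f(s))_{s=0}^n$ is an arithmetic progression; (c) $\overline{m}_f(s)=0$ for $s=2,\ldots,n$.
   Context: $[n]=\{1,\ldots,n\}$; $S_n$ is the symmetric group on $[n]$; for $\pi\in S_n$, $[0,1]^n_\pi=\{\mathbf{x}:x_{\pi(1)}<\cdots<x_{\pi(n)}\}$. A Lovász extension is a continuous function $f\colon[0,1]^n\to\mathbb{R}$ which, on each $[0,1]^n_\pi$, coincides with the unique affine function agreeing with $f$ at the $n+1$ vertices $\mathbf{1}_{\{\pi(i),\ldots,\pi(n)\}}$ ($i=1,\ldots,n+1$), where $\mathbf{1}_S$ is the characteristic vector of $S$. Set $v_f(S)=f(\mathbf{1}_S)$, $m_f(S)=\sum_{T\subseteq S}(-1)^{|S|-|T|}v_f(T)$, $\overline{v}_f(s)=\binom{n}{s}^{-1}\sum_{|S|=s}v_f(S)$ and $\overline{m}_f(s)=\binom{n}{s}^{-1}\sum_{|S|=s}m_f(S)$ for $s\in\{0,\ldots,n\}$. For $\mathbf{x}\in[0,1]^n$, $x_{(1)}\le\cdots\le x_{(n)}$ are its coordinates in ascending order, with $x_{(0)}=0$, $x_{(n+1)}=1$. The influence index is $I(f,k)=-(n+1)(n+2)\int_{[0,1]^n}f(\mathbf{x})\,\big(x_{(k+1)}-2x_{(k)}+x_{(k-1)}\big)\,d\mathbf{x}$.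 *)

theory Defs
  imports "HOL-Analysis.Analysis" "HOL-Library.Multiset"
begin

text \<open>The ground set [n] is the finite index type 'n, with n = CARD('n) (so n \<ge> 1).
  Points of [0,1]^n are vectors x :: real^'n in cbox 0 1.\<close>

definition charvec :: "'n::finite set \<Rightarrow> real^'n" where
  "charvec S = (\<chi> i. if i \<in> S then 1 else 0)"

definition perm_region :: "(nat \<Rightarrow> 'n::finite) \<Rightarrow> (real^'n) set" where
  "perm_region \<pi> = {x \<in> cbox 0 1. \<forall>i j. 1 \<le> i \<longrightarrow> i < j \<longrightarrow> j \<le> CARD('n) \<longrightarrow> x $ \<pi> i < x $ \<pi> j}"

definition lovasz_extension :: "(real^'n::finite \<Rightarrow> real) \<Rightarrow> bool" where
  "lovasz_extension f \<longleftrightarrow>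
     continuous_on (cbox 0 1) f \<and>
     (\<forall>\<pi>. bij_betw \<pi> {1..CARD('n)} (UNIV :: 'n set) \<longrightarrow>
        (\<exists>(c::real) (a::real^'n).
           (\<forall>i\<in>{1..CARD('n)+1}. c + a \<bullet> charvec (\<pi> ` {i..CARD('n)}) = f (charvec (\<pi> ` {i..CARD('n)}))) \<and>
           (\<forall>x\<in>perm_region \<pi>. f x = c + a \<bullet> x)))"

definition vf :: "(real^'n::finite \<Rightarrow> real) \<Rightarrow> 'n set \<Rightarrow> real" where
  "vf f S = f (charvec S)"

definition mf :: "(real^'n::finite \<Rightarrow> real) \<Rightarrow> 'n set \<Rightarrow> real" where
  "mf f S = (\<Sum>T\<in>Pow S. (-1) ^ (card S - card T) * vf f T)"

definition vbar :: "(real^'n::finite \<Rightarrow> real) \<Rightarrow> nat \<Rightarrow> real" where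
  "vbar f s = (\<Sum>S\<in>{S::'n set. card S = s}. vf f S) / real (CARD('n) choose s)"

definition mbar :: "(real^'n::finite \<Rightarrow> real) \<Rightarrow> nat \<Rightarrow> real" where
  "mbar f s = (\<Sum>S\<in>{S::'n set. card S = s}. mf f S) / real (CARD('n) choose s)"

definition order_stat :: "real^'n::finite \<Rightarrow> nat \<Rightarrow> real" where
  "order_stat x k =
     (if k = 0 then 0
      else if k \<le> CARD('n) then sorted_list_of_multiset (image_mset (\<lambda>i. x $ i) (mset_set UNIV)) ! (k - 1)
      else 1)"

definition influence :: "(real^'n::finite \<Rightarrow> real) \<Rightarrow> nat \<Rightarrow> real" where
  "influence f k = - (real CARD('n) + 1) * (real CARD('n) + 2) *
     integral (cbox 0 1) (\<lambda>x. f x * (order_stat x (k+1) - 2 * order_stat x k + order_stat x (k-1)))"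

end

theory Submission
  imports Defs
begin

text \<open>
  On the region where \<open>\<pi>\<close> sorts the coordinates of \<open>x\<close>, a Lovasz extension is the Choquet
  integral \<open>f x = (\<Sum>T. v(T) * \<lambda>(T, x))\<close>, where \<open>\<lambda>(T, x)\<close> is the length of the set of levels
  \<open>s \<in> (0, 1]\<close> whose upper level set \<open>{l. s \<le> x l}\<close> is exactly \<open>T\<close>. Summing \<open>\<lambda>(U, x)\<close> over
  \<open>|U| = u\<close> gives the spacing \<open>x_(n+1-u) - x_(n-u)\<close> of the order statistics, so the weight in
  \<open>I(f, k)\<close> is a difference of two such sums. The integral of \<open>\<lambda>(T, x) * \<lambda>(U, x)\<close> over the cube
  vanishes unless \<open>T\<close> and \<open>U\<close> are nested, and for \<open>T \<subseteq> U\<close> it is a Dirichlet integral equal to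
  \<open>t! (u - t)! (n - u)! / (n + 2)!\<close>, doubled when \<open>T = U\<close>. Averaging over the sets of each size
  yields \<open>I(f, k) = vbar(n + 1 - k) - vbar(n - k)\<close>, so (a) says that the differences of
  \<open>vbar\<close> are constant, which is (b). Finally, Moebius inversion gives
  \<open>vbar(t) = (\<Sum>s\<le>t. (t choose s) * mbar(s))\<close>, and such a binomial transform is affine in \<open>t\<close>
  exactly when \<open>mbar(s) = 0\<close> for \<open>s \<ge> 2\<close>, which is (c).
\<close>

section \<open>Moebius inversion and binomial transforms\<close>

lemma of_nat_binomial_fact_lemma:
  assumes "k \<le> n"
  shows "fact k * fact (n - k) * of_nat (n choose k) = (fact n :: 'a::semiring_char_0)"
proof -
  have "of_nat (fact k * fact (n - k) * (n choose k)) = (of_nat (fact n) :: 'a)"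
    using binomial_fact_lemma[OF assms] by (rule arg_cong)
  then show ?thesis by (simp only: of_nat_mult of_nat_fact)
qed

lemma vf_eq_sum_mf: "vf f T = (\<Sum>S\<in>Pow T. mf f S)"
proof -
  have sign: "(-1::real) ^ card S * (-1) ^ (card S - card R) = (-1) ^ card R"
    if "R \<subseteq> S" for R S :: "'a set"
  proof -
    have "card R \<le> card S" using that by (simp add: card_mono)
    then have "card S + (card S - card R) = card R + 2 * (card S - card R)" by simp
    then have "(-1::real) ^ (card S + (card S - card R)) = (-1) ^ card R"
      by (simp only:) (simp add: power_add power_mult)
    then show ?thesis by (simp only: power_add)
  qed
  have "vf f T = (\<Sum>S\<in>Pow T. (-1) ^ card S * ((-1) ^ card S * mf f S))"
  proof (rule inclusion_exclusion_symmetric[where f = "vf f"])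
    show "(-1) ^ card S * mf f S = (\<Sum>R\<in>Pow S. (-1) ^ card R * vf f R)" for S :: "'a set"
      unfolding mf_def sum_distrib_left by (intro sum.cong) (auto simp flip: sign mult.assoc)
  qed simp
  also have "\<dots> = (\<Sum>S\<in>Pow T. mf f S)"
    by (simp flip: mult.assoc power_add add: power_even_eq)
  finally show ?thesis .
qed

lemma card_supersets_of_card:
  fixes S :: "'a::finite set"
  assumes "card S \<le> t"
  shows "card {T. S \<subseteq> T \<and> card T = t} = (CARD('a) - card S) choose (t - card S)"
proof -
  have "bij_betw (\<lambda>X. X \<union> S) {X. X \<subseteq> - S \<and> card X = t - card S}
                                {T. S \<subseteq> T \<and> card T = t}"
  proof (rule bij_betwI[where g = "\<lambda>T. T - S"])
    show "(\<lambda>X. X \<union> S) \<in> {X. X \<subseteq> - S \<and> card X = t - card S}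
        \<rightarrow> {T. S \<subseteq> T \<and> card T = t}"
      using assms by (auto simp: card_Un_disjoint disjoint_eq_subset_Compl)
  qed (auto simp: card_Diff_subset)
  then have "card {T. S \<subseteq> T \<and> card T = t} = card {X. X \<subseteq> - S \<and> card X = t - card S}"
    by (simp add: bij_betw_same_card)
  also have "\<dots> = card (- S) choose (t - card S)" by (rule n_subsets) simp
  finally show ?thesis by (simp add: Compl_eq_Diff_UNIV card_Diff_subset)
qed

lemma sum_card_eq_vf:
  fixes f :: "real^'n::finite \<Rightarrow> real"
  shows "(\<Sum>T | card T = t. vf f T)
       = (\<Sum>s\<le>t. real ((CARD('n) - s) choose (t - s)) * (\<Sum>S | card S = s. mf f S))"
proof -
  have "(\<Sum>T | card T = t. vf f T) = (\<Sum>T | card T = t. \<Sum>S\<in>{S\<in>UNIV. S \<subseteq> T}. mf f S)"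
    by (simp add: vf_eq_sum_mf Pow_def)
  also have "\<dots> = (\<Sum>S\<in>UNIV. \<Sum>T\<in>{T\<in>{T. card T = t}. S \<subseteq> T}. mf f S)"
    by (rule sum.swap_restrict) simp_all
  also have "\<dots> = (\<Sum>S | card S \<le> t. real (card {T. S \<subseteq> T \<and> card T = t}) * mf f S)"
  proof (rule sum.mono_neutral_cong_right)
    show "\<forall>S\<in>UNIV - {S. card S \<le> t}. (\<Sum>T\<in>{T\<in>{T. card T = t}. S \<subseteq> T}. mf f S) = 0"
    proof
      fix S :: "'n set" assume "S \<in> UNIV - {S. card S \<le> t}"
      then have "{T\<in>{T. card T = t}. S \<subseteq> T} = {}" using card_mono[of _ S] by fastforce
      then show "(\<Sum>T\<in>{T\<in>{T. card T = t}. S \<subseteq> T}. mf f S) = 0" by simp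
    qed
  qed (simp_all add: conj_commute)
  also have "\<dots> = (\<Sum>s\<le>t. \<Sum>S | card S = s. real ((CARD('n) - s) choose (t - s)) * mf f S)"
    by (subst sum.group[symmetric, where g = card and T = "{..t}"])
       (auto simp: card_supersets_of_card intro!: sum.cong)
  finally show ?thesis by (simp add: sum_distrib_left)
qed

lemma vbar_eq_sum_mbar:
  fixes f :: "real^'n::finite \<Rightarrow> real"
  assumes "t \<le> CARD('n)"
  shows "vbar f t = (\<Sum>s\<le>t. real (t choose s) * mbar f s)"
proof -
  have "real ((CARD('n) - s) choose (t - s)) * M / real (CARD('n) choose t)
      = real (t choose s) * (M / real (CARD('n) choose s))" if "s \<le> t" for s M
    using choose_mult[of s t "CARD('n)"] that assms
    by (simp add: field_simps flip: of_nat_mult)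
  then show ?thesis
    unfolding vbar_def mbar_def sum_card_eq_vf sum_divide_distrib[where A = "{..t}"]
    by (intro sum.cong) auto
qed

lemma binomial_transform_affine_iff:
  fixes v m :: "nat \<Rightarrow> real"
  assumes v: "\<And>t. t \<le> N \<Longrightarrow> v t = (\<Sum>s\<le>t. real (t choose s) * m s)"
  shows "(\<exists>a d. \<forall>t\<le>N. v t = a + d * real t) \<longleftrightarrow> (\<forall>s\<in>{2..N}. m s = 0)"
proof
  assume "\<exists>a d. \<forall>t\<le>N. v t = a + d * real t"
  then obtain a d where ad: "\<And>t. t \<le> N \<Longrightarrow> v t = a + d * real t" by blast
  have "m j = 0" if "2 \<le> j" "j \<le> N" for j
    using that
  proof (induction j rule: less_induct)
    case (less j)
    have "v j = (\<Sum>s\<in>{0, 1, j}. real (j choose s) * m s)"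
      unfolding v[OF less.prems(2)]
    proof (rule sum.mono_neutral_right)
      show "\<forall>s\<in>{..j} - {0, 1, j}. real (j choose s) * m s = 0"
        using less.IH less.prems by auto
    qed (use less.prems in auto)
    then have vj: "v j = m 0 + real j * m 1 + m j" using less.prems by simp
    have m0: "m 0 = a" using ad[of 0] v[of 0] by simp
    have "m 1 = d" using ad[of 1] v[of 1] m0 less.prems by simp
    then have "real j * m 1 = d * real j" by simp
    with vj m0 show ?case using ad[OF less.prems(2)] by linarith
  qed
  then show "\<forall>s\<in>{2..N}. m s = 0" by simp
next
  assume vanish: "\<forall>s\<in>{2..N}. m s = 0"
  have "v t = m 0 + m 1 * real t" if "t \<le> N" for t
  proof -
    have "v t = (\<Sum>s\<in>{..t} \<inter> {0, 1}. real (t choose s) * m s)"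
      unfolding v[OF that] using that vanish by (intro sum.mono_neutral_right) auto
    then show ?thesis by (cases "t = 0") (auto simp: Int_insert_right)
  qed
  then show "\<exists>a d. \<forall>t\<le>N. v t = a + d * real t" by (intro exI) auto
qed

lemma sum_vf_card_eq:
  fixes f :: "real^'n::finite \<Rightarrow> real"
  shows "(\<Sum>T\<in>UNIV. vf f T * g (card T)) = (\<Sum>s\<le>CARD('n). real (CARD('n) choose s) * vbar f s * g s)"
proof -
  have "(\<Sum>T\<in>UNIV. vf f T * g (card T))
      = (\<Sum>s\<le>CARD('n). \<Sum>T\<in>{T\<in>UNIV. card T = s}. vf f T * g (card T))"
    by (rule sum.group[symmetric]) (auto simp: card_mono)
  also have "\<dots> = (\<Sum>s\<le>CARD('n). (\<Sum>T | card T = s. vf f T) * g s)"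
    by (intro sum.cong) (auto simp: sum_distrib_right)
  finally show ?thesis by (simp add: vbar_def)
qed

lemma sum_atMost_double_at:
  fixes v :: "nat \<Rightarrow> 'a::comm_semiring_1"
  assumes "u \<le> N"
  shows "(\<Sum>s\<le>N. (if u = s then 2 else 1) * v s) = (\<Sum>s\<le>N. v s) + v u"
proof -
  have "(if u = s then 2 else 1) * v s = v s + (if u = s then v s else 0)" for s
    by (simp add: mult_2)
  then show ?thesis using assms by (simp only: sum.distrib) simp
qed

lemma affine_iff_constant_differences:
  fixes v :: "nat \<Rightarrow> real"
  shows "(\<exists>a d. \<forall>s\<le>N. v s = a + d * real s) \<longleftrightarrow> (\<exists>d. \<forall>s<N. v (Suc s) - v s = d)"
proof
  assume "\<exists>a d. \<forall>s\<le>N. v s = a + d * real s"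
  then obtain a d where ad: "\<And>s. s \<le> N \<Longrightarrow> v s = a + d * real s" by blast
  have "v (Suc s) - v s = d" if "s < N" for s
    using ad[of s] ad[of "Suc s"] that by (simp add: algebra_simps)
  then show "\<exists>d. \<forall>s<N. v (Suc s) - v s = d" by blast
next
  assume "\<exists>d. \<forall>s<N. v (Suc s) - v s = d"
  then obtain d where d: "\<And>s. s < N \<Longrightarrow> v (Suc s) - v s = d" by blast
  have "v s = v 0 + d * real s" if "s \<le> N" for s
    using that
  proof (induction s)
    case (Suc s)
    have "v (Suc s) - v s = d" using d Suc.prems by simp
    moreover have "v s = v 0 + d * real s" using Suc by simp
    ultimately show ?case by (simp add: algebra_simps)
  qed simp
  then show "\<exists>a d. \<forall>s\<le>N. v s = a + d * real s" by blast
qed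

lemma summation_by_parts:
  fixes w y :: "nat \<Rightarrow> 'a::comm_ring"
  shows "(\<Sum>j=1..Suc n. w j * (y j - y (j - 1)))
       = w (Suc n) * y (Suc n) - w 1 * y 0 + (\<Sum>m=1..n. (w m - w (Suc m)) * y m)"
  by (induction n) (simp_all add: algebra_simps)

section \<open>Beta and Dirichlet integrals\<close>

lemma beta_nat_has_integral:
  "((\<lambda>w. w ^ p * (1 - w) ^ q) has_integral (fact p * fact q / fact (p + q + 1))) {0..1::real}"
proof -
  have beta: "((\<lambda>t. t powr (real (Suc p) - 1) * (1 - t) powr (real (Suc q) - 1))
      has_integral Beta (real (Suc p)) (real (Suc q))) {0..1}"
    by (rule has_integral_Beta_real) auto
  have g1: "Gamma (real (Suc p)) = fact p" using Gamma_fact[of p] by (simp add: add.commute)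
  have g2: "Gamma (real (Suc q)) = fact q" using Gamma_fact[of q] by (simp add: add.commute)
  have g3: "Gamma (real (Suc p) + real (Suc q)) = fact (p + q + 1)"
    using Gamma_fact[of "p+q+1"] by (simp add: algebra_simps)
  have "Beta (real (Suc p)) (real (Suc q)) = fact p * fact q / fact (p + q + 1)"
    unfolding Beta_def g1 g2 g3 ..
  with beta have integral: "((\<lambda>t. t powr (real (Suc p) - 1) * (1 - t) powr (real (Suc q) - 1))
      has_integral (fact p * fact q / fact (p + q + 1))) {0..1}"
    by (simp only:)
  have "x ^ p * (1 - x) ^ q = x powr (real (Suc p) - 1) * (1 - x) powr (real (Suc q) - 1)"
    if "x \<in> {0..1} - {0, 1}" for x :: real
    using that by (simp add: powr_realpow)
  from has_integral_spike_finite[of "{0, 1}", OF _ this integral] show ?thesis by simp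
qed

lemma nn_integral_beta_nat:
  "(\<integral>\<^sup>+w. ennreal (w ^ p * (1 - w) ^ q) * indicator {0..1} w \<partial>lborel)
     = ennreal (fact p * fact q / fact (p + q + 1))"
  by (rule nn_integral_has_integral_lebesgue'[OF _ beta_nat_has_integral]) auto

lemma nn_integral_beta_nat_scaled:
  assumes s: "0 < s"
  shows "(\<integral>\<^sup>+r. ennreal ((s - r) ^ b * r ^ c) * indicator {0..s} r \<partial>lborel)
       = ennreal (s ^ (b + c + 1) * (fact c * fact b / fact (c + b + 1)))"
proof -
  have "(\<integral>\<^sup>+r. ennreal ((s - r) ^ b * r ^ c) * indicator {0..s} r \<partial>lborel)
      = ennreal \<bar>s\<bar> * (\<integral>\<^sup>+w. ennreal ((s - (0 + s * w)) ^ b * (0 + s * w) ^ c)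
          * indicator {0..s} (0 + s * w) \<partial>lborel)"
    by (rule nn_integral_real_affine) (use s in auto)
  also have "(\<lambda>w. ennreal ((s - (0 + s * w)) ^ b * (0 + s * w) ^ c) * indicator {0..s} (0 + s * w))
           = (\<lambda>w. ennreal (s ^ (b + c)) * (ennreal (w ^ c * (1 - w) ^ b) * indicator {0..1} w))"
  proof
    fix w :: real
    have i: "indicator {0..s} (s * w) = (indicator {0..1} w :: ennreal)"
      using s by (auto simp: indicator_def zero_le_mult_iff)
    show "ennreal ((s - (0 + s * w)) ^ b * (0 + s * w) ^ c) * indicator {0..s} (0 + s * w)
        = ennreal (s ^ (b + c)) * (ennreal (w ^ c * (1 - w) ^ b) * indicator {0..1} w)"
    proof (cases "w \<in> {0..1}")
      case True
      have e: "s - s * w = s * (1 - w)" by (simp add: algebra_simps)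
      have "(s - s * w) ^ b * (s * w) ^ c = s ^ (b + c) * (w ^ c * (1 - w) ^ b)"
        unfolding e power_mult_distrib power_add by (simp add: mult_ac)
      moreover have "0 \<le> w ^ c * (1 - w) ^ b" using True by auto
      ultimately show ?thesis using i s True by (simp add: ennreal_mult' mult.assoc)
    next
      case False then show ?thesis using i by simp
    qed
  qed
  also have "(\<integral>\<^sup>+w. ennreal (s ^ (b + c)) * (ennreal (w ^ c * (1 - w) ^ b) * indicator {0..1} w) \<partial>lborel)
      = ennreal (s ^ (b + c)) * ennreal (fact c * fact b / fact (c + b + 1))"
    by (subst nn_integral_cmult) (auto simp: nn_integral_beta_nat)
  finally show ?thesis using s
    by (simp add: ennreal_mult'[symmetric] mult.assoc power_add)
qed

definition dirichlet_kernel :: "nat \<Rightarrow> nat \<Rightarrow> nat \<Rightarrow> real \<Rightarrow> real \<Rightarrow> real" where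
  "dirichlet_kernel a b c s r =
     (if 0 < r \<and> r < s \<and> s \<le> 1 then (1 - s) ^ a * (s - r) ^ b * r ^ c else 0)"

lemma dirichlet_kernel_measurable[measurable (raw)]:
  assumes [measurable]: "f \<in> M \<rightarrow>\<^sub>M borel" "g \<in> M \<rightarrow>\<^sub>M borel"
  shows "(\<lambda>\<omega>. dirichlet_kernel a b c (f \<omega>) (g \<omega>)) \<in> borel_measurable M"
  unfolding dirichlet_kernel_def by measurable

lemma nn_integral_dirichlet_kernel_inner:
  "(\<integral>\<^sup>+r. ennreal (dirichlet_kernel a b c s r) \<partial>lborel)
     = ennreal ((1 - s) ^ a * s ^ (b + c + 1) * (fact c * fact b / fact (c + b + 1))) * indicator {0..1} s"
proof (cases "0 < s \<and> s \<le> 1")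
  case True
  then have s: "0 < s" "s \<le> 1" by auto
  have "(\<integral>\<^sup>+r. ennreal (dirichlet_kernel a b c s r) \<partial>lborel)
      = (\<integral>\<^sup>+r. ennreal ((1 - s) ^ a) * (ennreal ((s - r) ^ b * r ^ c) * indicator {0..s} r) \<partial>lborel)"
  proof (rule nn_integral_cong_AE)
    have "AE r in lborel. r \<noteq> 0" "AE r in lborel. r \<noteq> s" by (rule AE_lborel_singleton)+
    then show "AE r in lborel. ennreal (dirichlet_kernel a b c s r)
        = ennreal ((1 - s) ^ a) * (ennreal ((s - r) ^ b * r ^ c) * indicator {0..s} r)"
    proof eventually_elim
      case (elim r)
      show ?case
      proof (cases "0 < r \<and> r < s")
        case True
        then have "0 \<le> (s - r) ^ b * r ^ c" by auto
        moreover have "0 \<le> (1 - s) ^ a" using s by auto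
        ultimately show ?thesis using True s by (simp add: dirichlet_kernel_def ennreal_mult' mult.assoc)
      next
        case False
        then have "r \<notin> {0..s}" using elim by auto
        moreover have "dirichlet_kernel a b c s r = 0" using False by (auto simp: dirichlet_kernel_def)
        ultimately show ?thesis by simp
      qed
    qed
  qed
  also have "\<dots> = ennreal ((1 - s) ^ a) * ennreal (s ^ (b + c + 1) * (fact c * fact b / fact (c + b + 1)))"
    by (subst nn_integral_cmult) (auto simp: nn_integral_beta_nat_scaled[OF s(1)])
  also have "\<dots> = ennreal ((1 - s) ^ a * s ^ (b + c + 1) * (fact c * fact b / fact (c + b + 1)))"
    using s by (simp add: ennreal_mult'[symmetric] mult.assoc)
  finally show ?thesis using s by simp
next
  case False
  then have "\<And>r. dirichlet_kernel a b c s r = 0" by (auto simp: dirichlet_kernel_def)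
  moreover have "s \<noteq> 0 \<Longrightarrow> indicator {0..1} s * x = (0::ennreal)" for x using False by auto
  ultimately show ?thesis by (cases "s = 0") auto
qed

lemma nn_integral_dirichlet_kernel:
  "(\<integral>\<^sup>+s. \<integral>\<^sup>+r. ennreal (dirichlet_kernel a b c s r) \<partial>lborel \<partial>lborel)
     = ennreal (fact a * fact b * fact c / fact (a + b + c + 2))"
proof -
  have "(\<integral>\<^sup>+s. \<integral>\<^sup>+r. ennreal (dirichlet_kernel a b c s r) \<partial>lborel \<partial>lborel)
     = (\<integral>\<^sup>+s. ennreal (fact c * fact b / fact (c + b + 1))
          * (ennreal (s ^ (b + c + 1) * (1 - s) ^ a) * indicator {0..1} s) \<partial>lborel)"
  proof (rule nn_integral_cong)
    fix s :: real
    show "(\<integral>\<^sup>+r. ennreal (dirichlet_kernel a b c s r) \<partial>lborel)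
        = ennreal (fact c * fact b / fact (c + b + 1))
          * (ennreal (s ^ (b + c + 1) * (1 - s) ^ a) * indicator {0..1} s)"
    proof (cases "s \<in> {0..1}")
      case True
      then have "0 \<le> s ^ (b + c + 1) * (1 - s) ^ a" by auto
      then show ?thesis unfolding nn_integral_dirichlet_kernel_inner using True
        by (simp add: ennreal_mult'[symmetric] mult_ac)
    qed (simp add: nn_integral_dirichlet_kernel_inner)
  qed
  also have "\<dots> = ennreal (fact c * fact b / fact (c + b + 1))
      * (\<integral>\<^sup>+s. ennreal (s ^ (b + c + 1) * (1 - s) ^ a) * indicator {0..1} s \<partial>lborel)"
    by (rule nn_integral_cmult) simp
  also have "\<dots> = ennreal (fact c * fact b / fact (c + b + 1))
      * ennreal (fact (b + c + 1) * fact a / fact (b + c + 1 + a + 1))"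
    by (simp only: nn_integral_beta_nat)
  also have "\<dots> = ennreal (fact a * fact b * fact c / fact (a + b + c + 2))"
  proof -
    have reorder: "c + b + 1 = b + c + 1" "b + c + 1 + a + 1 = a + b + c + 2" by simp_all
    have cancel: "fact c * fact b / F * (F * fact a / G) = fact a * fact b * fact c / G"
      if "F \<noteq> 0" for F G :: real
      using that by (simp add: field_simps)
    have "fact c * fact b / fact (c + b + 1) * (fact (b + c + 1) * fact a / fact (b + c + 1 + a + 1))
        = (fact a * fact b * fact c / fact (a + b + c + 2) :: real)"
      unfolding reorder by (rule cancel) simp
    then show ?thesis by (simp add: ennreal_mult'[symmetric])
  qed
  finally show ?thesis .
qed

lemma nn_integral_dirichlet_kernel_swap:
  "(\<integral>\<^sup>+s. \<integral>\<^sup>+r. ennreal (dirichlet_kernel a b c r s) \<partial>lborel \<partial>lborel)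
     = ennreal (fact a * fact b * fact c / fact (a + b + c + 2))"
proof -
  have "(\<lambda>(r, s). ennreal (dirichlet_kernel a b c r s)) \<in> borel_measurable (lborel \<Otimes>\<^sub>M lborel)"
    by measurable
  from lborel_pair.Fubini'[OF this] show ?thesis by (simp add: nn_integral_dirichlet_kernel)
qed

section \<open>Level sets of a point of the unit cube\<close>

text \<open>
  The levels in \<open>cut_levels T x\<close> are those whose upper level set \<open>{l. s \<le> x $ l}\<close> is exactly \<open>T\<close>,
  so \<open>cut_length T x\<close> is the weight of \<open>vf f T\<close> in the Choquet form of a Lovasz extension.
\<close>

definition cut_levels :: "'n::finite set \<Rightarrow> real^'n \<Rightarrow> real set" where
  "cut_levels T x =
     {s. 0 < s \<and> s \<le> 1 \<and> (\<forall>l. l \<notin> T \<longrightarrow> x$l < s) \<and> (\<forall>l. l \<in> T \<longrightarrow> s \<le> x$l)}"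

definition cut_length :: "'n::finite set \<Rightarrow> real^'n \<Rightarrow> real" where
  "cut_length T x = measure lborel (cut_levels T x)"

lemma measurable_vec_nth[measurable (raw)]:
  assumes "f \<in> M \<rightarrow>\<^sub>M borel"
  shows "(\<lambda>\<omega>. (f \<omega> :: real^'n::finite) $ l) \<in> M \<rightarrow>\<^sub>M borel"
proof -
  have "(\<lambda>x::real^'n. x $ l) \<in> borel \<rightarrow>\<^sub>M borel" by measurable
  from measurable_compose[OF assms this] show ?thesis by (simp add: o_def)
qed

lemma measurable_mem_cut_levels[measurable (raw)]:
  assumes [measurable]: "f \<in> M \<rightarrow>\<^sub>M borel" "g \<in> M \<rightarrow>\<^sub>M borel"
  shows "Measurable.pred M (\<lambda>\<omega>. g \<omega> \<in> cut_levels T (f \<omega>))"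
proof -
  have e: "(\<lambda>\<omega>. g \<omega> \<in> cut_levels T (f \<omega>)) = (\<lambda>\<omega>. 0 < g \<omega> \<and> g \<omega> \<le> 1
      \<and> (\<forall>l\<in>-T. f \<omega> $ l < g \<omega>) \<and> (\<forall>l\<in>T. g \<omega> \<le> f \<omega> $ l))"
    by (auto simp: cut_levels_def fun_eq_iff)
  show ?thesis unfolding e using assms by measurable
qed

lemma cut_levels_sets[measurable]: "cut_levels T x \<in> sets lborel"
proof -
  have "Measurable.pred lborel (\<lambda>s. s \<in> cut_levels T x)" by measurable
  then show ?thesis by (simp add: pred_def)
qed

lemma cut_levels_subset: "cut_levels T x \<subseteq> {0<..1}" by (auto simp: cut_levels_def)

lemma emeasure_cut_levels: "emeasure lborel (cut_levels T x) = ennreal (cut_length T x)"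
proof -
  have "emeasure lborel (cut_levels T x) \<le> emeasure lborel {0<..(1::real)}"
    by (rule emeasure_mono[OF cut_levels_subset]) simp
  then have "emeasure lborel (cut_levels T x) \<noteq> \<infinity>" by (auto simp: top_unique)
  then show ?thesis by (simp add: cut_length_def emeasure_eq_ennreal_measure)
qed

lemma cut_length_nonneg: "0 \<le> cut_length T x" by (simp add: cut_length_def)

lemma cut_length_nn_integral:
  "ennreal (cut_length T x) = (\<integral>\<^sup>+s. indicator (cut_levels T x) s \<partial>lborel)"
  by (simp add: emeasure_cut_levels[symmetric] nn_integral_indicator[OF cut_levels_sets])

lemma cut_length_measurable[measurable]: "cut_length T \<in> borel_measurable borel"
proof -
  have "(\<lambda>x. \<integral>\<^sup>+s. indicator (cut_levels T x) s \<partial>lborel) \<in> borel_measurable lborel"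
    by measurable
  then have "(\<lambda>x. enn2real (\<integral>\<^sup>+s. indicator (cut_levels T x) s \<partial>lborel)) \<in> borel_measurable lborel"
    by measurable
  moreover have "(\<lambda>x. enn2real (\<integral>\<^sup>+s. indicator (cut_levels T x) s \<partial>lborel)) = cut_length T"
    by (simp add: fun_eq_iff cut_length_nn_integral[symmetric] cut_length_nonneg)
  ultimately show ?thesis by simp
qed

lemma cut_levels_upper_set: "s \<in> cut_levels T x \<Longrightarrow> T = {l. s \<le> x$l}"
  by (auto simp: cut_levels_def not_le)

lemma emeasure_lborel_between_box_cbox:
  fixes a b :: "real^'n::finite"
  assumes "box a b \<subseteq> S" "S \<subseteq> cbox a b" "S \<in> sets lborel"
  shows "emeasure lborel S = ennreal (\<Prod>i\<in>UNIV. max 0 (b$i - a$i))"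
proof (cases "\<forall>i. a$i \<le> b$i")
  case True
  have eq: "emeasure lborel (box a b) = emeasure lborel (cbox a b)"
    by (simp add: emeasure_lborel_box_eq emeasure_lborel_cbox_eq)
  have "emeasure lborel (box a b) \<le> emeasure lborel S" by (rule emeasure_mono[OF assms(1,3)])
  moreover have "emeasure lborel S \<le> emeasure lborel (cbox a b)" by (rule emeasure_mono[OF assms(2)]) simp
  ultimately have "emeasure lborel S = emeasure lborel (cbox a b)" using eq by (auto intro: antisym)
  also have "\<dots> = ennreal (measure lborel (cbox a b))"
    using emeasure_lborel_cbox_finite[of a b] by (intro emeasure_eq_ennreal_measure) auto
  also have "a \<in> cbox a b" using True by (auto simp: mem_box_cart)
  then have "cbox a b \<noteq> {}" by auto
  then have "measure lborel (cbox a b) = (\<Prod>i\<in>UNIV. b$i - a$i)" by (rule content_cbox_cart)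
  also have "(\<Prod>i\<in>UNIV. b$i - a$i) = (\<Prod>i\<in>UNIV. max 0 (b$i - a$i))"
    using True by (intro prod.cong) auto
  finally show ?thesis .
next
  case False
  then obtain i where i: "b$i < a$i" by (auto simp: not_le)
  then have "cbox a b = {}" by (force simp: mem_box_cart dest: spec[of _ i])
  then have "S = {}" using assms by auto
  moreover have "(\<Prod>i\<in>UNIV. max 0 (b$i - a$i)) = 0"
    using i by (intro prod_zero) (auto intro!: exI[of _ i])
  ultimately show ?thesis by (metis emeasure_empty ennreal_0)
qed

definition cut_box :: "'n::finite set \<Rightarrow> 'n set \<Rightarrow> real \<Rightarrow> real \<Rightarrow> (real^'n) set" where
  "cut_box T U s r = {x. x \<in> cbox 0 1 \<and> s \<in> cut_levels T x \<and> r \<in> cut_levels U x}"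

text \<open>
  For \<open>T \<subseteq> U\<close> with \<open>t = |T|\<close>, \<open>m = |U - T|\<close>, \<open>p = |- U|\<close>, the set \<open>cut_box T U s r\<close> is, up to its
  boundary, the box in which the coordinates in \<open>T\<close> range over \<open>[max s r, 1]\<close>, those in \<open>U - T\<close>
  over \<open>[r, s]\<close> and the remaining ones over \<open>[0, min s r]\<close>.
\<close>

definition cut_box_volume :: "nat \<Rightarrow> nat \<Rightarrow> nat \<Rightarrow> real \<Rightarrow> real \<Rightarrow> real" where
  "cut_box_volume t m p s r =
     (if 0 < s \<and> s \<le> 1 \<and> 0 < r \<and> r \<le> 1
      then (1 - max s r) ^ t * max 0 (s - r) ^ m * min s r ^ p else 0)"

lemma measurable_mem_cut_box[measurable (raw)]:
  assumes [measurable]: "f \<in> M \<rightarrow>\<^sub>M borel" "g \<in> M \<rightarrow>\<^sub>M borel" "h \<in> M \<rightarrow>\<^sub>M borel"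
  shows "Measurable.pred M (\<lambda>\<omega>. (f \<omega> :: real^'n::finite) \<in> cut_box T U (g \<omega>) (h \<omega>))"
proof -
  have [measurable]: "cbox (0::real^'n) 1 \<in> sets borel" by simp
  have e: "(\<lambda>\<omega>. f \<omega> \<in> cut_box T U (g \<omega>) (h \<omega>))
      = (\<lambda>\<omega>. f \<omega> \<in> cbox 0 1 \<and> g \<omega> \<in> cut_levels T (f \<omega>) \<and> h \<omega> \<in> cut_levels U (f \<omega>))"
    by (auto simp: cut_box_def fun_eq_iff)
  show ?thesis unfolding e using assms by measurable
qed

lemma cut_box_sets[measurable]: "cut_box T U s r \<in> sets lborel"
proof -
  have "Measurable.pred lborel (\<lambda>x. x \<in> cut_box T U s r)" by measurable
  then show ?thesis by (simp add: pred_def)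
qed

definition cut_box_lower :: "'n::finite set \<Rightarrow> 'n set \<Rightarrow> real \<Rightarrow> real \<Rightarrow> real^'n" where
  "cut_box_lower T U s r = (\<chi> l. if l \<in> T then max s r else if l \<in> U then r else 0)"

definition cut_box_upper :: "'n::finite set \<Rightarrow> 'n set \<Rightarrow> real \<Rightarrow> real \<Rightarrow> real^'n" where
  "cut_box_upper T U s r = (\<chi> l. if l \<in> T then 1 else if l \<in> U then s else min s r)"

lemma box_subset_cut_box:
  assumes "T \<subseteq> U" "0 < s" "s \<le> 1" "0 < r" "r \<le> 1"
  shows "box (cut_box_lower T U s r) (cut_box_upper T U s r) \<subseteq> cut_box T U s r"
proof
  fix x assume "x \<in> box (cut_box_lower T U s r) (cut_box_upper T U s r)"
  then have x: "cut_box_lower T U s r $ l < x $ l \<and> x $ l < cut_box_upper T U s r $ l" for l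
    by (simp add: mem_box_cart)
  have "0 \<le> x $ l \<and> x $ l \<le> 1 \<and> (l \<notin> T \<longrightarrow> x $ l < s) \<and> (l \<in> T \<longrightarrow> s \<le> x $ l)
      \<and> (l \<notin> U \<longrightarrow> x $ l < r) \<and> (l \<in> U \<longrightarrow> r \<le> x $ l)" for l
    using x[of l] assms by (cases "l \<in> T"; cases "l \<in> U") (auto simp: cut_box_lower_def cut_box_upper_def)
  then show "x \<in> cut_box T U s r"
    using assms by (simp add: cut_box_def cut_levels_def mem_box_cart)
qed

lemma cut_box_subset_cbox:
  assumes "T \<subseteq> U"
  shows "cut_box T U s r \<subseteq> cbox (cut_box_lower T U s r) (cut_box_upper T U s r)"
proof
  fix x assume "x \<in> cut_box T U s r"
  then have "0 \<le> x $ l \<and> x $ l \<le> 1 \<and> (l \<notin> T \<longrightarrow> x $ l < s) \<and> (l \<in> T \<longrightarrow> s \<le> x $ l)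
      \<and> (l \<notin> U \<longrightarrow> x $ l < r) \<and> (l \<in> U \<longrightarrow> r \<le> x $ l)" for l
    by (auto simp: cut_box_def cut_levels_def mem_box_cart)
  then show "x \<in> cbox (cut_box_lower T U s r) (cut_box_upper T U s r)"
    using assms by (force simp: mem_box_cart cut_box_lower_def cut_box_upper_def)
qed

lemma prod_cut_box_sides:
  fixes T U :: "'n::finite set"
  assumes "T \<subseteq> U" "0 < s" "s \<le> 1" "0 < r" "r \<le> 1"
  shows "(\<Prod>l\<in>UNIV. max 0 (cut_box_upper T U s r $ l - cut_box_lower T U s r $ l))
       = cut_box_volume (card T) (card U - card T) (CARD('n) - card U) s r"
proof -
  define h where "h l = max 0 (cut_box_upper T U s r $ l - cut_box_lower T U s r $ l)" for l
  have partition: "(UNIV :: 'n set) = (T \<union> (U - T)) \<union> - U" using assms by auto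
  have "(\<Prod>l\<in>UNIV. h l) = (\<Prod>l\<in>T \<union> (U - T). h l) * (\<Prod>l\<in>- U. h l)"
    by (subst partition, rule prod.union_disjoint) (use assms in auto)
  also have "(\<Prod>l\<in>T \<union> (U - T). h l) = (\<Prod>l\<in>T. h l) * (\<Prod>l\<in>U - T. h l)"
    by (rule prod.union_disjoint) auto
  also have "(\<Prod>l\<in>T. h l) = (1 - max s r) ^ card T"
    using assms by (simp add: h_def cut_box_lower_def cut_box_upper_def)
  also have "(\<Prod>l\<in>U - T. h l) = max 0 (s - r) ^ (card U - card T)"
    using assms by (simp add: h_def cut_box_lower_def cut_box_upper_def card_Diff_subset)
  also have "(\<Prod>l\<in>- U. h l) = (\<Prod>l\<in>- U. min s r)"
    using assms by (intro prod.cong) (auto simp: h_def cut_box_lower_def cut_box_upper_def)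
  also have "\<dots> = min s r ^ (CARD('n) - card U)"
    by (simp add: Compl_eq_Diff_UNIV card_Diff_subset)
  finally show ?thesis using assms by (simp add: h_def cut_box_volume_def)
qed

lemma emeasure_cut_box:
  fixes T U :: "'n::finite set"
  assumes "T \<subseteq> U"
  shows "emeasure lborel (cut_box T U s r)
       = ennreal (cut_box_volume (card T) (card U - card T) (CARD('n) - card U) s r)"
proof (cases "0 < s \<and> s \<le> 1 \<and> 0 < r \<and> r \<le> 1")
  case False
  then have "cut_box T U s r = {}" by (auto simp: cut_box_def cut_levels_def)
  then show ?thesis by (simp add: cut_box_volume_def if_not_P[OF False])
next
  case True
  then have "box (cut_box_lower T U s r) (cut_box_upper T U s r) \<subseteq> cut_box T U s r"
    using box_subset_cut_box[OF assms] by blast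
  from emeasure_lborel_between_box_cbox[OF this cut_box_subset_cbox[OF assms] cut_box_sets]
  show ?thesis using prod_cut_box_sides[OF assms] True by simp
qed

section \<open>Integrals of products of cut lengths\<close>

lemma indicator_cut_box:
  "(indicator (cut_box T U s r) x :: ennreal)
     = indicator (cbox 0 1) x * indicator (cut_levels T x) s * indicator (cut_levels U x) r"
  by (simp add: cut_box_def indicator_def)

lemma cut_length_mult_eq_nn_integral_cut_box:
  "ennreal (indicator (cbox 0 1) x * cut_length T x * cut_length U x)
     = (\<integral>\<^sup>+s. \<integral>\<^sup>+r. indicator (cut_box T U s r) x \<partial>lborel \<partial>lborel)"
proof -
  let ?I = "\<lambda>T s. indicator (cut_levels T x) s :: ennreal"
  have "ennreal (indicator (cbox 0 1) x * cut_length T x * cut_length U x)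
      = indicator (cbox 0 1) x * (\<integral>\<^sup>+s. ?I T s \<partial>lborel) * (\<integral>\<^sup>+r. ?I U r \<partial>lborel)"
    by (simp add: cut_length_nn_integral[symmetric] ennreal_mult' cut_length_nonneg ennreal_indicator)
  also have "\<dots> = (\<integral>\<^sup>+s. \<integral>\<^sup>+r. indicator (cbox 0 1) x * ?I T s * ?I U r \<partial>lborel \<partial>lborel)"
    by (simp add: nn_integral_cmult nn_integral_multc mult.assoc)
  finally show ?thesis by (simp only: indicator_cut_box)
qed

lemma nn_integral_cut_length_mult:
  fixes T U :: "'n::finite set"
  assumes "T \<subseteq> U"
  shows "(\<integral>\<^sup>+x. ennreal (indicator (cbox 0 1) x * cut_length T x * cut_length U x) \<partial>lborel)
       = (\<integral>\<^sup>+s. \<integral>\<^sup>+r. ennreal (cut_box_volume (card T) (card U - card T) (CARD('n) - card U) s r)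
            \<partial>lborel \<partial>lborel)"
proof -
  have "(\<lambda>(x, s). \<integral>\<^sup>+r. indicator (cut_box T U s r) x \<partial>lborel)
      \<in> borel_measurable (lborel \<Otimes>\<^sub>M lborel)"
    by measurable
  note swap_x_s = lborel_pair.Fubini'[OF this]
  have "(\<lambda>(x, r). indicator (cut_box T U s r) x :: ennreal) \<in> borel_measurable (lborel \<Otimes>\<^sub>M lborel)"
    for s by measurable
  note swap_x_r = lborel_pair.Fubini'[OF this]
  have "(\<integral>\<^sup>+x. ennreal (indicator (cbox 0 1) x * cut_length T x * cut_length U x) \<partial>lborel)
      = (\<integral>\<^sup>+s. \<integral>\<^sup>+r. \<integral>\<^sup>+x. indicator (cut_box T U s r) x \<partial>lborel \<partial>lborel \<partial>lborel)"
    unfolding cut_length_mult_eq_nn_integral_cut_box using swap_x_s swap_x_r by simp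
  also have "\<dots> = (\<integral>\<^sup>+s. \<integral>\<^sup>+r. ennreal (cut_box_volume (card T) (card U - card T) (CARD('n) - card U) s r)
            \<partial>lborel \<partial>lborel)"
    by (simp add: nn_integral_indicator[OF cut_box_sets] emeasure_cut_box[OF assms])
  finally show ?thesis .
qed

lemma nn_integral_cut_box_volume_strict:
  assumes "1 \<le> m"
  shows "(\<integral>\<^sup>+s. \<integral>\<^sup>+r. ennreal (cut_box_volume t m p s r) \<partial>lborel \<partial>lborel)
       = ennreal (fact t * fact m * fact p / fact (t + m + p + 2))"
proof -
  have "cut_box_volume t m p s r = dirichlet_kernel t m p s r" for s r
  proof (cases "r < s")
    case True then show ?thesis by (auto simp: cut_box_volume_def dirichlet_kernel_def max_def min_def)
  next
    case False
    then have "max 0 (s - r) = 0" by simp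
    then show ?thesis using False assms by (auto simp: cut_box_volume_def dirichlet_kernel_def)
  qed
  then show ?thesis by (simp add: nn_integral_dirichlet_kernel)
qed

text \<open>For \<open>m = 0\<close> the integrand is symmetric in \<open>s\<close> and \<open>r\<close>, and each of the two triangles \<open>r < s\<close>,
  \<open>s < r\<close> contributes one Dirichlet integral.\<close>

lemma nn_integral_cut_box_volume_eq:
  "(\<integral>\<^sup>+s. \<integral>\<^sup>+r. ennreal (cut_box_volume t 0 p s r) \<partial>lborel \<partial>lborel)
     = ennreal (2 * fact t * fact p / fact (t + p + 2))"
proof -
  let ?D = "\<lambda>s r. ennreal (dirichlet_kernel t 0 p s r)"
  have "(\<lambda>(s, r). ?D s r) \<in> borel_measurable (lborel \<Otimes>\<^sub>M lborel)"
       "(\<lambda>(s, r). ?D r s) \<in> borel_measurable (lborel \<Otimes>\<^sub>M lborel)"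
    by measurable
  note inner_measurable = this[THEN lborel.borel_measurable_nn_integral]
  have "(\<integral>\<^sup>+r. ennreal (cut_box_volume t 0 p s r) \<partial>lborel)
      = (\<integral>\<^sup>+r. ?D s r \<partial>lborel) + (\<integral>\<^sup>+r. ?D r s \<partial>lborel)" for s
  proof -
    have "AE r in lborel. ennreal (cut_box_volume t 0 p s r) = ?D s r + ?D r s"
      using AE_lborel_singleton[of s] by eventually_elim
        (cases "s < r"; auto simp: cut_box_volume_def dirichlet_kernel_def max_def min_def)
    then show ?thesis by (simp add: nn_integral_cong_AE nn_integral_add)
  qed
  then have "(\<integral>\<^sup>+s. \<integral>\<^sup>+r. ennreal (cut_box_volume t 0 p s r) \<partial>lborel \<partial>lborel)
      = (\<integral>\<^sup>+s. \<integral>\<^sup>+r. ?D s r \<partial>lborel \<partial>lborel)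
        + (\<integral>\<^sup>+s. \<integral>\<^sup>+r. ?D r s \<partial>lborel \<partial>lborel)"
    using inner_measurable by (simp add: nn_integral_add)
  also have "\<dots> = ennreal (2 * fact t * fact p / fact (t + p + 2))"
    unfolding nn_integral_dirichlet_kernel nn_integral_dirichlet_kernel_swap
    by (simp add: mult_ac flip: ennreal_plus)
  finally show ?thesis .
qed

lemma nn_integral_cut_box_volume:
  "(\<integral>\<^sup>+s. \<integral>\<^sup>+r. ennreal (cut_box_volume t m p s r) \<partial>lborel \<partial>lborel)
     = ennreal ((if m = 0 then 2 else 1) * fact t * fact m * fact p / fact (t + m + p + 2))"
  using nn_integral_cut_box_volume_eq[of t p] nn_integral_cut_box_volume_strict[of m t p]
  by (cases "m = 0") simp_all

lemma cut_length_mult_has_integral: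
  fixes T U :: "'n::finite set"
  assumes "T \<subseteq> U"
  shows "((\<lambda>x. cut_length T x * cut_length U x) has_integral
           (if T = U then 2 else 1) * fact (card T) * fact (card U - card T) * fact (CARD('n) - card U)
             / fact (CARD('n) + 2)) (cbox 0 1)"
    (is "(_ has_integral ?I) _")
proof -
  have "card U \<le> CARD('n)" "card T \<le> card U" using assms by (simp_all add: card_mono)
  then have total: "card T + (card U - card T) + (CARD('n) - card U) + 2 = CARD('n) + 2" by simp
  have equal: "card U - card T = 0 \<longleftrightarrow> T = U"
    using assms \<open>card T \<le> card U\<close> by (metis card_subset_eq diff_is_0_eq finite le_antisym)
  have nn: "(\<integral>\<^sup>+x. ennreal (indicator (cbox 0 1) x * cut_length T x * cut_length U x) \<partial>lborel)
      = ennreal ?I"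
    unfolding nn_integral_cut_length_mult[OF assms] nn_integral_cut_box_volume total equal ..
  have [measurable]: "cbox (0::real^'n) 1 \<in> sets borel" by simp
  have "((\<lambda>x. indicator (cbox 0 1) x * cut_length T x * cut_length U x) has_integral ?I) UNIV"
  proof (rule nn_integral_has_integral[OF _ _ nn])
    show "(\<lambda>x. indicator (cbox 0 1) x * cut_length T x * cut_length U x) \<in> borel_measurable borel"
      by measurable
  qed (simp_all add: cut_length_nonneg)
  moreover have "(\<lambda>x. indicator (cbox 0 1) x * cut_length T x * cut_length U x)
      = (\<lambda>x. if x \<in> cbox 0 1 then cut_length T x * cut_length U x else 0)"
    by (simp add: indicator_def fun_eq_iff)
  ultimately show ?thesis by (simp only: has_integral_restrict_UNIV)
qed

lemma cut_length_mult_eq_0: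
  assumes "\<not> T \<subseteq> U" "\<not> U \<subseteq> T"
  shows "cut_length T x * cut_length U x = 0"
proof (cases "cut_levels T x = {} \<or> cut_levels U x = {}")
  case True then show ?thesis by (auto simp: cut_length_def)
next
  case False
  then obtain s r where "s \<in> cut_levels T x" "r \<in> cut_levels U x" by blast
  then have "T = {l. s \<le> x$l}" "U = {l. r \<le> x$l}" by (simp_all add: cut_levels_upper_set)
  then have "T \<subseteq> U \<or> U \<subseteq> T" by (cases "s \<le> r") auto
  with assms show ?thesis by blast
qed

lemma cut_length_mult_integrable:
  "(\<lambda>x. cut_length T x * cut_length U x) integrable_on cbox 0 1"
proof -
  consider "T \<subseteq> U" | "U \<subseteq> T" | "\<not> T \<subseteq> U" "\<not> U \<subseteq> T" by blast
  then show ?thesis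
  proof cases
    case 2
    then show ?thesis
      using cut_length_mult_has_integral[OF 2] by (auto simp: mult.commute)
  qed (auto dest: cut_length_mult_has_integral simp: cut_length_mult_eq_0)
qed

lemma integral_cut_length_mult:
  fixes T U :: "'n::finite set"
  assumes "T \<subseteq> U"
  shows "integral (cbox 0 1) (\<lambda>x. cut_length T x * cut_length U x)
       = (if T = U then 2 else 1) * fact (card T) * fact (card U - card T) * fact (CARD('n) - card U)
           / fact (CARD('n) + 2)"
  using cut_length_mult_has_integral[OF assms] by (rule integral_unique)

lemma integral_cut_length_mult_incomparable:
  assumes "\<not> T \<subseteq> U" "\<not> U \<subseteq> T"
  shows "integral (cbox 0 1) (\<lambda>x. cut_length T x * cut_length U x) = 0"
  by (simp add: cut_length_mult_eq_0[OF assms])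

lemma sum_integral_cut_length_mult_same_card:
  fixes T :: "'n::finite set"
  shows "(\<Sum>U | card U = card T. integral (cbox 0 1) (\<lambda>x. cut_length T x * cut_length U x))
       = 2 * fact (card T) * fact (CARD('n) - card T) / fact (CARD('n) + 2)"
proof -
  have "(\<Sum>U | card U = card T. integral (cbox 0 1) (\<lambda>x. cut_length T x * cut_length U x))
      = integral (cbox 0 1) (\<lambda>x. cut_length T x * cut_length T x)"
  proof (rule sum.mono_neutral_left[where S = "{T}", simplified, symmetric])
    show "\<forall>U\<in>{U. card U = card T} - {T}. integral (cbox 0 1) (\<lambda>x. cut_length T x * cut_length U x) = 0"
      by (auto intro!: integral_cut_length_mult_incomparable dest: card_subset_eq[rotated])
  qed auto
  then show ?thesis by (simp add: integral_cut_length_mult)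
qed

lemma sum_integral_cut_length_mult_larger_card:
  fixes T :: "'n::finite set"
  assumes "card T < u" "u \<le> CARD('n)"
  shows "(\<Sum>U | card U = u. integral (cbox 0 1) (\<lambda>x. cut_length T x * cut_length U x))
       = fact (card T) * fact (CARD('n) - card T) / fact (CARD('n) + 2)"
proof -
  let ?N = "CARD('n)" and ?t = "card T"
  let ?J = "\<lambda>U. integral (cbox 0 1) (\<lambda>x. cut_length T x * cut_length U x)"
  have "(\<Sum>U | card U = u. ?J U) = (\<Sum>U | T \<subseteq> U \<and> card U = u. ?J U)"
    using assms by (intro sum.mono_neutral_right)
                   (auto intro!: integral_cut_length_mult_incomparable dest: card_mono[rotated])
  also have "\<dots> = (\<Sum>U | T \<subseteq> U \<and> card U = u. fact ?t * fact (u - ?t) * fact (?N - u) / fact (?N + 2))"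
    using assms by (intro sum.cong) (auto simp: integral_cut_length_mult)
  also have "\<dots> = real ((?N - ?t) choose (u - ?t)) * (fact ?t * fact (u - ?t) * fact (?N - u) / fact (?N + 2))"
    using assms by (simp add: card_supersets_of_card)
  also have "\<dots> = fact ?t * fact (?N - ?t) / fact (?N + 2)"
  proof -
    have "fact (u - ?t) * fact (?N - u) * real ((?N - ?t) choose (u - ?t)) = fact (?N - ?t)"
      using of_nat_binomial_fact_lemma[of "u - ?t" "?N - ?t", where 'a = real] assms by simp
    then show ?thesis by (simp add: field_simps)
  qed
  finally show ?thesis .
qed

lemma sum_integral_cut_length_mult_smaller_card:
  fixes T :: "'n::finite set"
  assumes "u < card T"
  shows "(\<Sum>U | card U = u. integral (cbox 0 1) (\<lambda>x. cut_length T x * cut_length U x))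
       = fact (card T) * fact (CARD('n) - card T) / fact (CARD('n) + 2)"
proof -
  let ?N = "CARD('n)" and ?t = "card T"
  let ?J = "\<lambda>U. integral (cbox 0 1) (\<lambda>x. cut_length T x * cut_length U x)"
  have "(\<Sum>U | card U = u. ?J U) = (\<Sum>U | U \<subseteq> T \<and> card U = u. ?J U)"
    using assms by (intro sum.mono_neutral_right)
                   (auto intro!: integral_cut_length_mult_incomparable dest: card_mono[rotated])
  also have "\<dots> = (\<Sum>U | U \<subseteq> T \<and> card U = u. fact u * fact (?t - u) * fact (?N - ?t) / fact (?N + 2))"
    using assms by (intro sum.cong) (auto simp: integral_cut_length_mult mult.commute[of "cut_length T _"])
  also have "\<dots> = real (?t choose u) * (fact u * fact (?t - u) * fact (?N - ?t) / fact (?N + 2))"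
    using n_subsets[of T u] by simp
  also have "\<dots> = fact ?t * fact (?N - ?t) / fact (?N + 2)"
  proof -
    have "fact u * fact (?t - u) * real (?t choose u) = fact ?t"
      using of_nat_binomial_fact_lemma[of u ?t, where 'a = real] assms by simp
    then show ?thesis by (simp add: field_simps)
  qed
  finally show ?thesis .
qed

lemma sum_integral_cut_length_mult:
  fixes T :: "'n::finite set"
  assumes "u \<le> CARD('n)"
  shows "(\<Sum>U | card U = u. integral (cbox 0 1) (\<lambda>x. cut_length T x * cut_length U x))
       = (if u = card T then 2 else 1) * fact (card T) * fact (CARD('n) - card T) / fact (CARD('n) + 2)"
  using sum_integral_cut_length_mult_same_card[of T] sum_integral_cut_length_mult_larger_card[OF _ assms]
        sum_integral_cut_length_mult_smaller_card[of u T]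
  by (cases u "card T" rule: linorder_cases) auto

section \<open>Lovasz extensions on the order regions\<close>

lemma inner_charvec: "a \<bullet> charvec S = (\<Sum>l\<in>S. a $ l)"
  by (simp add: inner_vec_def charvec_def if_distrib sum.If_cases)

definition ranked_coord :: "(nat \<Rightarrow> 'n::finite) \<Rightarrow> real^'n \<Rightarrow> nat \<Rightarrow> real" where
  "ranked_coord \<pi> x j = (if j = 0 then 0 else if j \<le> CARD('n) then x $ \<pi> j else 1)"

definition upper_ranked_set :: "(nat \<Rightarrow> 'n::finite) \<Rightarrow> nat \<Rightarrow> 'n set" where
  "upper_ranked_set \<pi> j = \<pi> ` {j..CARD('n)}"

lemma ranked_coord_perm:
  fixes \<pi> :: "nat \<Rightarrow> 'n::finite" and x :: "real^'n"
  shows "m \<in> {1..CARD('n)} \<Longrightarrow> ranked_coord \<pi> x m = x $ \<pi> m"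
  by (simp add: ranked_coord_def)

context
  fixes \<pi> :: "nat \<Rightarrow> 'n::finite"
  assumes bij: "bij_betw \<pi> {1..CARD('n)} UNIV"
begin

lemma perm_inj: "inj_on \<pi> {1..CARD('n)}" using bij by (simp add: bij_betw_def)

lemma perm_surj: "\<exists>m\<in>{1..CARD('n)}. l = \<pi> m"
  using bij by (auto simp: bij_betw_def)

lemma perm_mem_upper_ranked_set_iff:
  assumes m: "m \<in> {1..CARD('n)}"
  shows "\<pi> m \<in> upper_ranked_set \<pi> j \<longleftrightarrow> j \<le> m"
proof
  assume "\<pi> m \<in> upper_ranked_set \<pi> j"
  then obtain m' where m': "m' \<in> {j..CARD('n)}" "\<pi> m = \<pi> m'" by (auto simp: upper_ranked_set_def)
  show "j \<le> m"
  proof (cases "j = 0")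
    case False
    then have "m' \<in> {1..CARD('n)}" using m' by auto
    then have "m = m'" using perm_inj m m'(2) by (auto dest: inj_onD)
    then show ?thesis using m' by simp
  qed simp
next
  assume "j \<le> m"
  then show "\<pi> m \<in> upper_ranked_set \<pi> j" using m by (auto simp: upper_ranked_set_def)
qed

lemma card_upper_ranked_set:
  assumes "1 \<le> j"
  shows "card (upper_ranked_set \<pi> j) = CARD('n) + 1 - j"
proof -
  have "inj_on \<pi> {j..CARD('n)}" using perm_inj by (rule inj_on_subset) (use assms in auto)
  then show ?thesis by (simp add: upper_ranked_set_def card_image)
qed

lemma inj_on_upper_ranked_set: "inj_on (upper_ranked_set \<pi>) {1..CARD('n)+1}"
proof (rule inj_onI)
  fix i j assume "i \<in> {1..CARD('n)+1}" "j \<in> {1..CARD('n)+1}"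
    and "upper_ranked_set \<pi> i = upper_ranked_set \<pi> j"
  then show "i = j" using card_upper_ranked_set[of i] card_upper_ranked_set[of j] by auto
qed

context
  fixes x :: "real^'n"
  assumes reg: "x \<in> perm_region \<pi>"
begin

lemma ranked_coord_strict_mono:
  "1 \<le> i \<Longrightarrow> i < j \<Longrightarrow> j \<le> CARD('n) \<Longrightarrow> ranked_coord \<pi> x i < ranked_coord \<pi> x j"
  using reg by (auto simp: perm_region_def ranked_coord_def)

lemma coord_bounds: "0 \<le> x $ l \<and> x $ l \<le> 1"
proof -
  have "x \<in> cbox 0 1" using reg by (simp add: perm_region_def)
  then show ?thesis by (simp add: mem_box_cart)
qed

lemma ranked_coord_bounds: "0 \<le> ranked_coord \<pi> x j \<and> ranked_coord \<pi> x j \<le> 1"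
  using coord_bounds by (simp add: ranked_coord_def)

lemma ranked_coord_mono:
  assumes "i \<le> j"
  shows "ranked_coord \<pi> x i \<le> ranked_coord \<pi> x j"
proof (cases "i = 0 \<or> i = j \<or> CARD('n) < j")
  case True
  then show ?thesis
    using ranked_coord_bounds[of j] ranked_coord_bounds[of i] by (auto simp: ranked_coord_def)
next
  case False
  then show ?thesis using assms ranked_coord_strict_mono[of i j] by simp
qed

lemma cut_levels_upper_ranked_set:
  assumes j: "j \<in> {1..CARD('n)+1}"
  shows "cut_levels (upper_ranked_set \<pi> j) x = {ranked_coord \<pi> x (j - 1)<..ranked_coord \<pi> x j}"
proof (intro set_eqI iffI)
  fix s assume s: "s \<in> cut_levels (upper_ranked_set \<pi> j) x"
  then have s1: "0 < s" "s \<le> 1" "\<And>l. l \<notin> upper_ranked_set \<pi> j \<Longrightarrow> x$l < s"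
    "\<And>l. l \<in> upper_ranked_set \<pi> j \<Longrightarrow> s \<le> x$l"
    by (auto simp: cut_levels_def)
  have "ranked_coord \<pi> x (j - 1) < s"
  proof (cases "j = 1")
    case True then show ?thesis using s1 by (simp add: ranked_coord_def)
  next
    case False
    then have jm: "j - 1 \<in> {1..CARD('n)}" using j by auto
    then have "\<pi> (j - 1) \<notin> upper_ranked_set \<pi> j" using perm_mem_upper_ranked_set_iff[OF jm] False j by auto
    then show ?thesis using s1(3) ranked_coord_perm[OF jm] by simp
  qed
  moreover have "s \<le> ranked_coord \<pi> x j"
  proof (cases "j = CARD('n) + 1")
    case True then show ?thesis using s1 by (simp add: ranked_coord_def)
  next
    case False
    then have jm: "j \<in> {1..CARD('n)}" using j by auto
    then have "\<pi> j \<in> upper_ranked_set \<pi> j" using perm_mem_upper_ranked_set_iff[OF jm] by auto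
    then show ?thesis using s1(4) ranked_coord_perm[OF jm] by simp
  qed
  ultimately show "s \<in> {ranked_coord \<pi> x (j - 1)<..ranked_coord \<pi> x j}" by simp
next
  fix s assume s: "s \<in> {ranked_coord \<pi> x (j - 1)<..ranked_coord \<pi> x j}"
  then have s1: "ranked_coord \<pi> x (j - 1) < s" "s \<le> ranked_coord \<pi> x j" by auto
  have "0 < s" using s1 ranked_coord_bounds[of "j - 1"] by linarith
  moreover have "s \<le> 1" using s1 ranked_coord_bounds[of j] by linarith
  moreover have "x$l < s" if "l \<notin> upper_ranked_set \<pi> j" for l
  proof -
    obtain m where m: "m \<in> {1..CARD('n)}" "l = \<pi> m" using perm_surj by blast
    then have "m < j" using that perm_mem_upper_ranked_set_iff[OF m(1)] by auto
    then have "ranked_coord \<pi> x m \<le> ranked_coord \<pi> x (j - 1)" by (intro ranked_coord_mono) simp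
    then show ?thesis using s1 ranked_coord_perm[OF m(1)] m(2) by simp
  qed
  moreover have "s \<le> x$l" if "l \<in> upper_ranked_set \<pi> j" for l
  proof -
    obtain m where m: "m \<in> {1..CARD('n)}" "l = \<pi> m" using perm_surj by blast
    then have "j \<le> m" using that perm_mem_upper_ranked_set_iff[OF m(1)] by auto
    then have "ranked_coord \<pi> x j \<le> ranked_coord \<pi> x m" by (intro ranked_coord_mono)
    then show ?thesis using s1 ranked_coord_perm[OF m(1)] m(2) by simp
  qed
  ultimately show "s \<in> cut_levels (upper_ranked_set \<pi> j) x" by (simp add: cut_levels_def)
qed

lemma cut_length_upper_ranked_set:
  assumes j: "j \<in> {1..CARD('n)+1}"
  shows "cut_length (upper_ranked_set \<pi> j) x = ranked_coord \<pi> x j - ranked_coord \<pi> x (j - 1)"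
proof -
  have "ranked_coord \<pi> x (j - 1) \<le> ranked_coord \<pi> x j" by (intro ranked_coord_mono) simp
  then show ?thesis unfolding cut_length_def cut_levels_upper_ranked_set[OF j] by simp
qed

lemma cut_length_not_upper_ranked_set:
  assumes T: "T \<notin> upper_ranked_set \<pi> ` {1..CARD('n)+1}"
  shows "cut_length T x = 0"
proof (rule ccontr)
  assume "cut_length T x \<noteq> 0"
  then have "cut_levels T x \<noteq> {}" by (auto simp: cut_length_def)
  then obtain s where s: "s \<in> cut_levels T x" by blast
  then have Ts: "T = {l. s \<le> x$l}" by (rule cut_levels_upper_set)
  have s1: "s \<le> 1" using s by (simp add: cut_levels_def)
  define j where "j = (LEAST m. 1 \<le> m \<and> s \<le> ranked_coord \<pi> x m)"
  have ex: "1 \<le> CARD('n) + 1 \<and> s \<le> ranked_coord \<pi> x (CARD('n) + 1)" using s1 by (simp add: ranked_coord_def)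
  have jP: "1 \<le> j \<and> s \<le> ranked_coord \<pi> x j" unfolding j_def by (rule LeastI[of _ "CARD('n) + 1"]) (rule ex)
  have jle: "j \<le> CARD('n) + 1" unfolding j_def by (rule Least_le) (rule ex)
  have "T = upper_ranked_set \<pi> j"
  proof (intro set_eqI iffI)
    fix l assume "l \<in> T"
    then have sl: "s \<le> x$l" using Ts by simp
    obtain m where m: "m \<in> {1..CARD('n)}" "l = \<pi> m" using perm_surj by blast
    then have "1 \<le> m \<and> s \<le> ranked_coord \<pi> x m" using sl ranked_coord_perm[OF m(1)] by simp
    then have "j \<le> m" unfolding j_def by (rule Least_le)
    then show "l \<in> upper_ranked_set \<pi> j" using perm_mem_upper_ranked_set_iff[OF m(1)] m(2) by simp
  next
    fix l assume l: "l \<in> upper_ranked_set \<pi> j"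
    obtain m where m: "m \<in> {1..CARD('n)}" "l = \<pi> m" using perm_surj by blast
    then have "j \<le> m" using l perm_mem_upper_ranked_set_iff[OF m(1)] by simp
    then have "ranked_coord \<pi> x j \<le> ranked_coord \<pi> x m" by (rule ranked_coord_mono)
    then show "l \<in> T" using Ts jP ranked_coord_perm[OF m(1)] m(2) by simp
  qed
  then show False using T jP jle by auto
qed

lemma sum_mult_cut_length_eq:
  fixes c :: "'n set \<Rightarrow> real"
  shows "(\<Sum>T\<in>UNIV. c T * cut_length T x)
       = (\<Sum>j=1..CARD('n)+1. c (upper_ranked_set \<pi> j) * (ranked_coord \<pi> x j - ranked_coord \<pi> x (j - 1)))"
proof -
  have "(\<Sum>T\<in>UNIV. c T * cut_length T x) = (\<Sum>T\<in>upper_ranked_set \<pi> ` {1..CARD('n)+1}. c T * cut_length T x)"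
    by (rule sum.mono_neutral_right) (auto simp: cut_length_not_upper_ranked_set)
  also have "\<dots> = (\<Sum>j=1..CARD('n)+1. c (upper_ranked_set \<pi> j) * cut_length (upper_ranked_set \<pi> j) x)"
    by (rule sum.reindex[OF inj_on_upper_ranked_set, unfolded comp_def])
  also have "\<dots> = (\<Sum>j=1..CARD('n)+1. c (upper_ranked_set \<pi> j) * (ranked_coord \<pi> x j - ranked_coord \<pi> x (j - 1)))"
    by (rule sum.cong[OF refl]) (simp add: cut_length_upper_ranked_set)
  finally show ?thesis .
qed

lemma sum_cut_length_card_eq:
  assumes u: "u \<le> CARD('n)"
  shows "(\<Sum>U | card U = u. cut_length U x)
       = ranked_coord \<pi> x (CARD('n) + 1 - u) - ranked_coord \<pi> x (CARD('n) - u)"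
proof -
  let ?j = "CARD('n) + 1 - u"
  have j: "?j \<in> {1..CARD('n)+1}" using u by auto
  have cj: "card (upper_ranked_set \<pi> ?j) = u" using card_upper_ranked_set[of ?j] u by simp
  have "(\<Sum>U\<in>{U::'n set. card U = u}. cut_length U x) = (\<Sum>U\<in>{upper_ranked_set \<pi> ?j}. cut_length U x)"
  proof (rule sum.mono_neutral_right)
    show "\<forall>U\<in>{U::'n set. card U = u} - {upper_ranked_set \<pi> ?j}. cut_length U x = 0"
    proof
      fix U :: "'n set" assume U: "U \<in> {U. card U = u} - {upper_ranked_set \<pi> ?j}"
      have "U \<notin> upper_ranked_set \<pi> ` {1..CARD('n)+1}"
      proof
        assume "U \<in> upper_ranked_set \<pi> ` {1..CARD('n)+1}"
        then obtain i where i: "i \<in> {1..CARD('n)+1}" "U = upper_ranked_set \<pi> i" by blast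
        then have "card U = CARD('n) + 1 - i" using card_upper_ranked_set by simp
        then have "i = ?j" using U i by auto
        then show False using U i by simp
      qed
      then show "cut_length U x = 0" by (rule cut_length_not_upper_ranked_set)
    qed
  qed (use cj in auto)
  also have "\<dots> = ranked_coord \<pi> x ?j - ranked_coord \<pi> x (?j - 1)" using cut_length_upper_ranked_set[OF j] by simp
  also have "?j - 1 = CARD('n) - u" by simp
  finally show ?thesis .
qed

lemma order_stat_eq_ranked_coord: "order_stat x k = ranked_coord \<pi> x k"
proof -
  let ?N = "CARD('n)"
  define L where "L = map (\<lambda>m. x $ \<pi> m) [1..<?N+1]"
  have "mset L = image_mset (\<lambda>m. x $ \<pi> m) (mset_set {1..<?N+1})"
    by (simp only: L_def mset_map mset_upt)
  also have "\<dots> = image_mset (\<lambda>i. x $ i) (image_mset \<pi> (mset_set {1..<?N+1}))"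
    by (simp add: multiset.map_comp o_def)
  also have "image_mset \<pi> (mset_set {1..<?N+1}) = mset_set (\<pi> ` {1..<?N+1})"
    by (rule image_mset_mset_set) (use perm_inj in \<open>simp add: atLeastLessThanSuc_atLeastAtMost\<close>)
  also have "\<pi> ` {1..<?N+1} = UNIV" using bij by (simp add: bij_betw_def atLeastLessThanSuc_atLeastAtMost)
  finally have mL: "image_mset (\<lambda>i. x $ i) (mset_set UNIV) = mset L" by simp
  have len: "length L = ?N" by (simp add: L_def)
  have nth: "i < ?N \<Longrightarrow> L ! i = x $ \<pi> (Suc i)" for i by (simp add: L_def nth_map del: upt_Suc)
  have "sorted L"
  proof (rule sorted_iff_nth_mono_less[THEN iffD2], intro allI impI)
    fix i j assume ij: "i < j" "j < length L"
    then have "ranked_coord \<pi> x (Suc i) < ranked_coord \<pi> x (Suc j)" using len by (intro ranked_coord_strict_mono) auto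
    then show "L ! i \<le> L ! j" using ij len nth by (simp add: ranked_coord_def)
  qed
  then have sL: "sorted_list_of_multiset (image_mset (\<lambda>i. x $ i) (mset_set UNIV)) = L"
    unfolding mL by (simp add: sorted_sort_id)
  show ?thesis
  proof (cases "k = 0 \<or> ?N < k")
    case True then show ?thesis by (auto simp: order_stat_def ranked_coord_def)
  next
    case False
    then have k: "1 \<le> k" "k \<le> ?N" by auto
    then have "L ! (k - 1) = x $ \<pi> k" using nth[of "k - 1"] by simp
    then show ?thesis using k by (simp add: order_stat_def ranked_coord_def sL)
  qed
qed

text \<open>
  Evaluating the affine piece \<open>c + a \<bullet> x\<close> of \<open>f\<close> at the vertices \<open>charvec (upper_ranked_set \<pi> i)\<close>
  gives \<open>a $ \<pi> m = w m - w (m + 1)\<close> for \<open>w i = vf f (upper_ranked_set \<pi> i)\<close>; summation by parts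
  then turns \<open>c + a \<bullet> x\<close> into the Choquet form.
\<close>

lemma lovasz_extension_eq_on_perm_region:
  assumes f: "lovasz_extension f"
  shows "f x = (\<Sum>j=1..CARD('n)+1.
                  vf f (upper_ranked_set \<pi> j) * (ranked_coord \<pi> x j - ranked_coord \<pi> x (j - 1)))"
proof -
  let ?N = "CARD('n)"
  obtain c a where ca: "\<forall>i\<in>{1..?N+1}. c + a \<bullet> charvec (\<pi> ` {i..?N}) = f (charvec (\<pi> ` {i..?N}))"
      and fx: "\<forall>x\<in>perm_region \<pi>. f x = c + a \<bullet> x"
    using f bij unfolding lovasz_extension_def by blast
  define w where "w i = vf f (upper_ranked_set \<pi> i)" for i
  define Sa where "Sa i = (\<Sum>m=i..?N. a $ \<pi> m)" for i
  have SA: "a \<bullet> charvec (\<pi> ` {i..?N}) = Sa i" if "1 \<le> i" for i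
  proof -
    have "inj_on \<pi> {i..?N}" using perm_inj by (rule inj_on_subset) (use that in auto)
    then show ?thesis unfolding inner_charvec Sa_def by (simp add: sum.reindex)
  qed
  have cw: "c + Sa i = w i" if "i \<in> {1..?N+1}" for i
  proof -
    have i1: "1 \<le> i" using that by simp
    show ?thesis using ca[rule_format, OF that] SA[OF i1] by (simp add: w_def vf_def upper_ranked_set_def)
  qed
  have c: "c = w (?N + 1)" using cw[of "?N+1"] by (simp add: Sa_def)
  have am: "a $ \<pi> m = w m - w (Suc m)" if "m \<in> {1..?N}" for m
  proof -
    have "Sa m = a $ \<pi> m + Sa (Suc m)" using that by (simp add: Sa_def sum.atLeast_Suc_atMost)
    then show ?thesis using cw[of m] cw[of "Suc m"] that by simp
  qed
  have "a \<bullet> x = (\<Sum>l\<in>UNIV. a $ l * x $ l)" by (simp add: inner_vec_def)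
  also have "\<dots> = (\<Sum>m=1..?N. a $ \<pi> m * x $ \<pi> m)"
  proof -
    have "UNIV = \<pi> ` {1..?N}" using bij by (simp add: bij_betw_def)
    then show ?thesis using sum.reindex[OF perm_inj, of "\<lambda>l. a $ l * x $ l"] by simp
  qed
  also have "\<dots> = (\<Sum>m=1..?N. (w m - w (Suc m)) * ranked_coord \<pi> x m)"
    by (rule sum.cong[OF refl]) (simp add: am ranked_coord_perm)
  finally have ax: "a \<bullet> x = (\<Sum>m=1..?N. (w m - w (Suc m)) * ranked_coord \<pi> x m)" .
  have "f x = c + a \<bullet> x" using fx reg by blast
  also have "\<dots> = w (Suc ?N) * ranked_coord \<pi> x (Suc ?N) - w 1 * ranked_coord \<pi> x 0
      + (\<Sum>m=1..?N. (w m - w (Suc m)) * ranked_coord \<pi> x m)"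
    using c ax by (simp add: ranked_coord_def)
  also have "\<dots> = (\<Sum>j=1..Suc ?N. w j * (ranked_coord \<pi> x j - ranked_coord \<pi> x (j - 1)))"
    by (rule summation_by_parts[symmetric])
  finally show ?thesis by (simp add: w_def)
qed

end

end

lemma sorting_perm_exists:
  fixes x :: "real^'n::finite"
  assumes x: "x \<in> cbox 0 1" and inj: "inj (\<lambda>i. x$i)"
  shows "\<exists>\<pi>. bij_betw \<pi> {1..CARD('n)} UNIV \<and> x \<in> perm_region \<pi>"
proof -
  let ?g = "\<lambda>i. x$i"
  let ?N = "CARD('n)"
  define xs where "xs = sorted_list_of_set (range ?g)"
  have len: "length xs = ?N" using inj by (simp add: xs_def card_image)
  have sw: "sorted_wrt (<) xs" unfolding xs_def by (rule strict_sorted_list_of_set)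
  have setxs: "set xs = range ?g" by (simp add: xs_def)
  define \<pi> where "\<pi> m = inv ?g (xs ! (m - 1))" for m
  have gpi: "x $ \<pi> m = xs ! (m - 1)" if "m \<in> {1..?N}" for m
  proof -
    have "xs ! (m - 1) \<in> range ?g" using that len setxs nth_mem[of "m - 1" xs] by auto
    then show ?thesis unfolding \<pi>_def by (rule f_inv_into_f)
  qed
  have injpi: "inj_on \<pi> {1..?N}"
  proof (rule inj_onI)
    fix i j assume i: "i \<in> {1..?N}" and j: "j \<in> {1..?N}" and e: "\<pi> i = \<pi> j"
    then have "xs ! (i - 1) = xs ! (j - 1)" using gpi[OF i] gpi[OF j] by metis
    moreover have "distinct xs" using sw by (simp add: strict_sorted_iff)
    moreover have "i - 1 < length xs" "j - 1 < length xs" using i j len by auto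
    ultimately have "i - 1 = j - 1" using nth_eq_iff_index_eq[of xs "i - 1" "j - 1"] by blast
    then show "i = j" using i j by (cases i; cases j) auto
  qed
  have img: "\<pi> ` {1..?N} = UNIV"
  proof -
    have "card (\<pi> ` {1..?N}) = ?N" using injpi by (simp add: card_image)
    then show ?thesis by (intro card_subset_eq) auto
  qed
  have "bij_betw \<pi> {1..?N} UNIV" using injpi img by (simp add: bij_betw_def)
  moreover have "x \<in> perm_region \<pi>"
  proof -
    have "x $ \<pi> i < x $ \<pi> j" if "1 \<le> i" "i < j" "j \<le> ?N" for i j
    proof -
      have "xs ! (i - 1) < xs ! (j - 1)" using sorted_wrt_nth_less[OF sw, of "i - 1" "j - 1"] that len by simp
      then show ?thesis using gpi[of i] gpi[of j] that by simp
    qed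
    then show ?thesis using x by (simp add: perm_region_def)
  qed
  ultimately show ?thesis by blast
qed

definition tie_set :: "(real^'n::finite) set" where
  "tie_set = \<Union> ((\<lambda>(i, j). {x. x$i = x$j}) ` {(i, j). i \<noteq> j})"

lemma negligible_tie_set: "negligible (tie_set :: (real^'n::finite) set)"
  unfolding tie_set_def
proof (rule negligible_Union)
  show "finite ((\<lambda>(i, j). {x::real^'n. x$i = x$j}) ` {(i, j). i \<noteq> j})" by simp
next
  fix S assume "S \<in> (\<lambda>(i, j). {x::real^'n. x$i = x$j}) ` {(i, j). i \<noteq> j}"
  then obtain i j :: 'n where ij: "i \<noteq> j" and S: "S = {x. x$i = x$j}" by auto
  have "S = {x. (axis i 1 - axis j 1) \<bullet> x = 0}" unfolding S by (auto simp: inner_diff_left inner_axis')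
  moreover have "axis i (1::real) - axis j 1 \<noteq> 0"
  proof
    assume "axis i (1::real) - axis j 1 = 0"
    then have "(axis i (1::real) - axis j 1) $ i = 0" by simp
    then show False using ij by (simp add: axis_def)
  qed
  moreover have "negligible {x::real^'n. (axis i 1 - axis j 1) \<bullet> x = 0}"
    by (rule negligible_hyperplane) (use \<open>axis i (1::real) - axis j 1 \<noteq> 0\<close> in blast)
  ultimately show "negligible S" by simp
qed

lemma inj_coords_not_tie: "x \<notin> tie_set \<Longrightarrow> inj (\<lambda>i. (x::real^'n::finite)$i)"
  unfolding tie_set_def by (auto simp: inj_def)

lemma lovasz_extension_eq_sum_cut_length:
  fixes f :: "real^'n::finite \<Rightarrow> real"
  assumes "lovasz_extension f" "x \<in> cbox 0 1 - tie_set"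
  shows "f x = (\<Sum>T\<in>UNIV. vf f T * cut_length T x)"
proof -
  obtain \<pi> where \<pi>: "bij_betw \<pi> {1..CARD('n)} UNIV" "x \<in> perm_region \<pi>"
    using assms(2) sorting_perm_exists inj_coords_not_tie by blast
  show ?thesis
    using lovasz_extension_eq_on_perm_region[OF \<pi> assms(1)] sum_mult_cut_length_eq[OF \<pi>] by simp
qed

lemma order_stat_diff_eq_sum_cut_length:
  fixes x :: "real^'n::finite"
  assumes "x \<in> cbox 0 1 - tie_set" "u \<le> CARD('n)"
  shows "order_stat x (CARD('n) + 1 - u) - order_stat x (CARD('n) - u)
       = (\<Sum>U | card U = u. cut_length U x)"
proof -
  obtain \<pi> where \<pi>: "bij_betw \<pi> {1..CARD('n)} UNIV" "x \<in> perm_region \<pi>"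
    using assms(1) sorting_perm_exists inj_coords_not_tie by blast
  show ?thesis
    using sum_cut_length_card_eq[OF \<pi> assms(2)] by (simp add: order_stat_eq_ranked_coord[OF \<pi>])
qed

section \<open>Influence indices\<close>

lemma lovasz_mult_sum_cut_length_has_integral:
  fixes f :: "real^'n::finite \<Rightarrow> real"
  assumes f: "lovasz_extension f" and u: "u \<le> CARD('n)"
  shows "((\<lambda>x. f x * (\<Sum>U | card U = u. cut_length U x)) has_integral
           fact CARD('n) / fact (CARD('n) + 2) * ((\<Sum>s\<le>CARD('n). vbar f s) + vbar f u)) (cbox 0 1)"
proof -
  let ?N = "CARD('n)"
  define c where "c t = (if u = t then 2 else 1) * fact t * fact (?N - t) / (fact (?N + 2) :: real)" for t
  have integral: "((\<lambda>x. \<Sum>T\<in>UNIV. vf f T * (\<Sum>U | card U = u. cut_length T x * cut_length U x))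
          has_integral (\<Sum>T\<in>UNIV. vf f T * c (card T))) (cbox 0 1)"
  proof (intro has_integral_sum has_integral_mult_right finite)
    fix T :: "'n set"
    have "((\<lambda>x. \<Sum>U | card U = u. cut_length T x * cut_length U x) has_integral
        (\<Sum>U | card U = u. integral (cbox 0 1) (\<lambda>x. cut_length T x * cut_length U x))) (cbox 0 1)"
      by (intro has_integral_sum finite integrable_integral cut_length_mult_integrable)
    then show "((\<lambda>x. \<Sum>U | card U = u. cut_length T x * cut_length U x) has_integral c (card T))
        (cbox 0 1)"
      unfolding sum_integral_cut_length_mult[OF u] c_def .
  qed
  have "real (?N choose s) * vbar f s * c s
      = fact ?N / fact (?N + 2) * ((if u = s then 2 else 1) * vbar f s)" if "s \<le> ?N" for s
  proof -
    have "real (?N choose s) * vbar f s * c s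
        = (if u = s then 2 else 1) * vbar f s * (fact s * fact (?N - s) * real (?N choose s))
          / fact (?N + 2)"
      by (simp add: c_def mult_ac)
    then show ?thesis unfolding of_nat_binomial_fact_lemma[OF that] by simp
  qed
  then have "(\<Sum>T\<in>UNIV. vf f T * c (card T))
      = fact ?N / fact (?N + 2) * (\<Sum>s\<le>?N. (if u = s then 2 else 1) * vbar f s)"
    unfolding sum_vf_card_eq sum_distrib_left by (intro sum.cong) simp_all
  also have "\<dots> = fact ?N / fact (?N + 2) * ((\<Sum>s\<le>?N. vbar f s) + vbar f u)"
    by (simp only: sum_atMost_double_at[OF u])
  finally have closed_form: "(\<Sum>T\<in>UNIV. vf f T * c (card T))
      = fact ?N / fact (?N + 2) * ((\<Sum>s\<le>?N. vbar f s) + vbar f u)" .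
  have "f x * (\<Sum>U | card U = u. cut_length U x)
      = (\<Sum>T\<in>UNIV. vf f T * (\<Sum>U | card U = u. cut_length T x * cut_length U x))"
    if "x \<in> cbox 0 1 - tie_set" for x :: "real^'n"
    unfolding lovasz_extension_eq_sum_cut_length[OF f that]
    by (simp add: sum_distrib_left sum_distrib_right mult.assoc) (rule sum.swap)
  then show ?thesis
    using has_integral_spike[OF negligible_tie_set _ integral] unfolding closed_form by simp
qed

lemma influence_eq_vbar_diff:
  fixes f :: "real^'n::finite \<Rightarrow> real"
  assumes f: "lovasz_extension f" and k: "k \<in> {1..CARD('n)}"
  shows "influence f k = vbar f (Suc (CARD('n) - k)) - vbar f (CARD('n) - k)"
proof -
  let ?N = "CARD('n)" and ?S = "\<lambda>u x. \<Sum>U | card U = u. cut_length U x"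
  let ?c = "fact ?N / fact (?N + 2) :: real"
  have order_stats: "order_stat x (k + 1) - 2 * order_stat x k + order_stat x (k - 1)
      = ?S (?N - k) x - ?S (Suc (?N - k)) x"
    if "x \<in> cbox 0 1 - tie_set" for x :: "real^'n"
  proof -
    have "Suc (?N - k) \<le> ?N" using k by auto
    then show ?thesis
      using order_stat_diff_eq_sum_cut_length[OF that, of "?N - k"]
            order_stat_diff_eq_sum_cut_length[OF that, of "Suc (?N - k)"] k
      by (simp add: Suc_diff_le)
  qed
  have integral: "((\<lambda>x. f x * ?S (?N - k) x - f x * ?S (Suc (?N - k)) x) has_integral
      ?c * (vbar f (?N - k) - vbar f (Suc (?N - k)))) (cbox 0 1)"
  proof -
    have "Suc (?N - k) \<le> ?N" using k by auto
    note diff = has_integral_diff[OF lovasz_mult_sum_cut_length_has_integral[OF f, of "?N - k"]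
                                    lovasz_mult_sum_cut_length_has_integral[OF f this]]
    have "?c * (V + a) - ?c * (V + b) = ?c * (a - b)" for V a b :: real
      unfolding right_diff_distrib[symmetric] by simp
    then show ?thesis using diff by (simp only:)
  qed
  have "((\<lambda>x. f x * (order_stat x (k + 1) - 2 * order_stat x k + order_stat x (k - 1)))
      has_integral ?c * (vbar f (?N - k) - vbar f (Suc (?N - k)))) (cbox 0 1)"
    by (rule has_integral_spike[OF negligible_tie_set _ integral]) (metis order_stats right_diff_distrib)
  then have "influence f k = - (real ?N + 1) * (real ?N + 2) * (?c * (vbar f (?N - k) - vbar f (Suc (?N - k))))"
    unfolding influence_def by (simp add: integral_unique)
  also have "\<dots> = vbar f (Suc (?N - k)) - vbar f (?N - k)"
  proof -
    have "(fact (?N + 2) :: real) = (real ?N + 1) * (real ?N + 2) * fact ?N"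
      by (simp add: algebra_simps)
    moreover have "(real ?N + 1) * (real ?N + 2) * fact ?N \<noteq> 0" by simp
    ultimately have normalise: "(real ?N + 1) * (real ?N + 2) * ?c = 1" by simp
    have "- p * q * (c * X) = - (p * q * c) * X" for p q c X :: real
      by (simp add: algebra_simps)
    then show ?thesis by (simp only: normalise) simp
  qed
  finally show ?thesis .
qed

lemma influences_equal_iff_vbar_differences_constant:
  fixes f :: "real^'n::finite \<Rightarrow> real"
  assumes "lovasz_extension f"
  shows "(\<forall>k\<in>{1..CARD('n)}. influence f k = influence f 1)
     \<longleftrightarrow> (\<exists>d. \<forall>s<CARD('n). vbar f (Suc s) - vbar f s = d)"
proof
  assume equal: "\<forall>k\<in>{1..CARD('n)}. influence f k = influence f 1"
  have "vbar f (Suc s) - vbar f s = influence f 1" if "s < CARD('n)" for s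
  proof -
    have k: "CARD('n) - s \<in> {1..CARD('n)}" using that by auto
    then have "influence f (CARD('n) - s) = influence f 1" using equal by blast
    with that show ?thesis using influence_eq_vbar_diff[OF assms k] by simp
  qed
  then show "\<exists>d. \<forall>s<CARD('n). vbar f (Suc s) - vbar f s = d" by blast
next
  assume "\<exists>d. \<forall>s<CARD('n). vbar f (Suc s) - vbar f s = d"
  then obtain d where d: "\<And>s. s < CARD('n) \<Longrightarrow> vbar f (Suc s) - vbar f s = d" by blast
  have "influence f k = d" if "k \<in> {1..CARD('n)}" for k
    using influence_eq_vbar_diff[OF assms that] d[of "CARD('n) - k"] that by simp
  moreover have "1 \<in> {1..CARD('n)}" by (simp add: Suc_le_eq)
  ultimately show "\<forall>k\<in>{1..CARD('n)}. influence f k = influence f 1" by simp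
qed

theorem proposition24:
  fixes f :: "real^'n::finite \<Rightarrow> real"
  assumes "lovasz_extension f"
  shows "((\<forall>k\<in>{1..CARD('n)}. influence f k = influence f 1)
           \<longleftrightarrow> (\<exists>a d. \<forall>s\<le>CARD('n). vbar f s = a + d * real s))
       \<and> ((\<exists>a d. \<forall>s\<le>CARD('n). vbar f s = a + d * real s)
           \<longleftrightarrow> (\<forall>s\<in>{2..CARD('n)}. mbar f s = 0))"
proof
  show "(\<forall>k\<in>{1..CARD('n)}. influence f k = influence f 1)
    \<longleftrightarrow> (\<exists>a d. \<forall>s\<le>CARD('n). vbar f s = a + d * real s)"
    unfolding influences_equal_iff_vbar_differences_constant[OF assms]
    by (rule affine_iff_constant_differences[symmetric])
  show "(\<exists>a d. \<forall>s\<le>CARD('n). vbar f s = a + d * real s)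
    \<longleftrightarrow> (\<forall>s\<in>{2..CARD('n)}. mbar f s = 0)"
    by (rule binomial_transform_affine_iff[OF vbar_eq_sum_mbar])
qed

end
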